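(* Let $k\ge 2$ be an integer and $n\ge 1$, $\ell\ge 0$ integers. Let ${\sf S}_k(n,\ell)$ denote the number of $k$-noncrossing RNA structures on $\{1,\dots,n\}$ with exactly $\ell$ isolated vertices, ${\sf S}_k(n)=\sum_{\ell}{\sf S}_k(n,\ell)$ the total number of $k$-noncrossing RNA structures on $\{1,\dots,n\}$, and $f_k(m,\ell)$ the number of $k$-noncrossing digraphs on $\{1,\dots,m\}$ with exactly $\ell$ isolated vertices (with $f_k(m,\ell)=0$ if $\ell>m$). Then $$ {\sf S}_k(n,\ell)=\sum_{b=0}^{\lfloor (n-\ell)/2\rfloor}(-1)^b\binom{n-b}{b}f_k(n-2b,\ell), $$ and $$ {\sf S}_k(n)=\sum_{b=0}^{\lfloor n/2\rfloor}(-1)^b\binom{n-b}{b}\left\{\sum_{\ell=0}^{n-2b}f_k(n-2b,\ell)\right\}. $$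
   Context: A digraph on $\{1,\dots,n\}$ is a set of arcs $(i,j)$ with $1\le i<j\le n$. It is a $k$-noncrossing digraph if every vertex lies in at most one arc and there are no $k$ arcs $(i_1,j_1),\dots,(i_k,j_k)$ with $i_1<i_2<\dots<i_k<j_1<j_2<\dots<j_k$ (no $k$ mutually crossing arcs). A vertex is isolated if it lies in no arc. A $1$-arc is an arc of the form $(i,i+1)$. A $k$-noncrossing RNA structure is a $k$-noncrossing digraph containing no $1$-arc. Known facts (not part of the claim): $f_k(m,\ell)=\binom{m}{\ell}f_k(m-\ell,0)$, and $\sum_{m\ge 1}f_k(m,0)x^m/m!=\det[I_{i-j}(2x)-I_{i+j}(2x)]_{i,j=1}^{k-1}$, where $I_r(2x)=\sum_{j\ge 0}x^{2r+j}/(j!(r+j)!)$; multiplying by $e^x$ gives the exponential generating function of $\sum_{\ell}f_k(m,\ell)$. *)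

theory Defs
  imports Main
begin

definition is_digraph :: "nat \<Rightarrow> (nat \<times> nat) set \<Rightarrow> bool" where
  "is_digraph n G \<longleftrightarrow> (\<forall>(i,j)\<in>G. 1 \<le> i \<and> i < j \<and> j \<le> n)"

definition lies_in :: "nat \<Rightarrow> nat \<times> nat \<Rightarrow> bool" where
  "lies_in v a \<longleftrightarrow> v = fst a \<or> v = snd a"

definition has_k_crossing :: "nat \<Rightarrow> (nat \<times> nat) set \<Rightarrow> bool" where
  "has_k_crossing k G \<longleftrightarrow>
     (\<exists>i j :: nat \<Rightarrow> nat.
        (\<forall>t<k. (i t, j t) \<in> G) \<and>
        (\<forall>t. Suc t < k \<longrightarrow> i t < i (Suc t) \<and> j t < j (Suc t)) \<and>
        (0 < k \<longrightarrow> i (k - 1) < j 0))"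

definition k_noncrossing_digraph :: "nat \<Rightarrow> nat \<Rightarrow> (nat \<times> nat) set \<Rightarrow> bool" where
  "k_noncrossing_digraph k n G \<longleftrightarrow>
     is_digraph n G \<and>
     (\<forall>v. card {a\<in>G. lies_in v a} \<le> 1) \<and>
     \<not> has_k_crossing k G"

definition isolated_vertices :: "nat \<Rightarrow> (nat \<times> nat) set \<Rightarrow> nat set" where
  "isolated_vertices n G = {v\<in>{1..n}. \<forall>a\<in>G. \<not> lies_in v a}"

definition no_1_arc :: "(nat \<times> nat) set \<Rightarrow> bool" where
  "no_1_arc G \<longleftrightarrow> (\<forall>i. (i, Suc i) \<notin> G)"

definition k_noncrossing_RNA :: "nat \<Rightarrow> nat \<Rightarrow> (nat \<times> nat) set \<Rightarrow> bool" where
  "k_noncrossing_RNA k n G \<longleftrightarrow> k_noncrossing_digraph k n G \<and> no_1_arc G"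

definition f_count :: "nat \<Rightarrow> nat \<Rightarrow> nat \<Rightarrow> nat" where
  "f_count k m l = card {G. k_noncrossing_digraph k m G \<and> card (isolated_vertices m G) = l}"

definition S_count :: "nat \<Rightarrow> nat \<Rightarrow> nat \<Rightarrow> nat" where
  "S_count k n l = card {G. k_noncrossing_RNA k n G \<and> card (isolated_vertices n G) = l}"

definition S_total :: "nat \<Rightarrow> nat \<Rightarrow> nat" where
  "S_total k n = card {G. k_noncrossing_RNA k n G}"

end

theory Submission
  imports Defs
begin

text \<open>Inclusion-exclusion over the 1-arcs: S_k(n,l) is the alternating sum, over sets B of
  1-arcs, of the number of k-noncrossing digraphs with l isolated vertices containing B. Only sets B
  of pairwise vertex-disjoint 1-arcs contribute, and there are C(n-b,b) of them with b arcs. For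
  k \<ge> 2 no arc of a k-crossing is a 1-arc, so contracting the arcs of such a B (deleting both
  endpoints of each) is a bijection onto the k-noncrossing digraphs on n-2b vertices, preserving
  isolated vertices; hence B contributes (-1)^b f_k(n-2b,l).\<close>

lemma sum_Pow_minus_one_power:
  assumes "finite A"
  shows "(\<Sum>B\<in>Pow A. (-1::int) ^ card B) = (if A = {} then 1 else 0)"
proof (cases "A = {}")
  case False
  then have "card {B. B \<subseteq> A \<and> {} \<subseteq> B \<and> even (card B)} = card {B. B \<subseteq> A \<and> {} \<subseteq> B \<and> odd (card B)}"
    using assms by (intro card_subsupersets_even_odd) auto
  then have "(\<Sum>B\<in>Pow A. (-1::int) ^ card B) = 0"
    using assms by (intro sum_alternating_cancels) simp_all
  with False show ?thesis by simp
qed simp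

lemma card_avoiding_eq_alternating_sum:
  assumes "finite D" "finite A"
  shows "int (card {G\<in>D. G \<inter> A = {}}) = (\<Sum>B\<in>Pow A. (-1) ^ card B * int (card {G\<in>D. B \<subseteq> G}))"
proof -
  have "int (card {G\<in>D. G \<inter> A = {}}) = (\<Sum>G\<in>D. if G \<inter> A = {} then 1 else 0)"
    using assms(1) by (simp add: sum.If_cases Int_def)
  also have "\<dots> = (\<Sum>G\<in>D. \<Sum>B\<in>{B\<in>Pow A. B \<subseteq> G}. (-1) ^ card B)"
  proof (rule sum.cong[OF refl])
    fix G
    have "Pow (G \<inter> A) = {B\<in>Pow A. B \<subseteq> G}" by auto
    then show "(if G \<inter> A = {} then 1 else 0) = (\<Sum>B\<in>{B\<in>Pow A. B \<subseteq> G}. (-1::int) ^ card B)"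
      using sum_Pow_minus_one_power[of "G \<inter> A"] assms(2) by simp
  qed
  also have "\<dots> = (\<Sum>B\<in>Pow A. \<Sum>G\<in>{G\<in>D. B \<subseteq> G}. (-1) ^ card B)"
    using assms by (intro sum.swap_restrict) simp_all
  finally show ?thesis by (simp add: mult.commute)
qed

lemma bounded_chain_le:
  assumes "\<forall>t. Suc t < k \<longrightarrow> (f::nat \<Rightarrow> nat) t < f (Suc t)" "s \<le> t" "t < k"
  shows "f s + (t - s) \<le> f t"
  using assms(2,3)
proof (induction t)
  case (Suc t)
  then show ?case using assms(1) by (cases "s = Suc t") (auto simp: Suc_diff_le)
qed simp

lemma k_crossing_arc_gap:
  assumes "2 \<le> k"
    and "\<forall>t. Suc t < k \<longrightarrow> I t < I (Suc t) \<and> J t < J (Suc t)"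
    and "I (k - 1) < J 0" "t < k"
  shows "Suc (I t) < J t"
proof -
  have "I t + (k - 1 - t) \<le> I (k - 1)"
    using assms(2,4) by (intro bounded_chain_le[of k]) auto
  moreover have "J 0 + t \<le> J t"
    using assms(2,4) bounded_chain_le[of k J 0 t] by auto
  ultimately show ?thesis using assms(1,3) by linarith
qed

lemma has_k_crossingI:
  assumes "\<forall>t<k. (I t, J t) \<in> G"
    and "\<forall>t. Suc t < k \<longrightarrow> I t < I (Suc t) \<and> J t < J (Suc t)"
    and "0 < k \<longrightarrow> I (k - 1) < J 0"
  shows "has_k_crossing k G"
  using assms unfolding has_k_crossing_def by blast

lemma has_k_crossing_mono: "has_k_crossing k G \<Longrightarrow> G \<subseteq> G' \<Longrightarrow> has_k_crossing k G'"
  unfolding has_k_crossing_def by blast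

lemma has_k_crossing_insert_1arc:
  assumes "2 \<le> k"
  shows "has_k_crossing k (insert (i, Suc i) G) \<longleftrightarrow> has_k_crossing k G"
proof
  assume "has_k_crossing k (insert (i, Suc i) G)"
  then obtain I J where arcs: "\<forall>t<k. (I t, J t) \<in> insert (i, Suc i) G"
    and mono: "\<forall>t. Suc t < k \<longrightarrow> I t < I (Suc t) \<and> J t < J (Suc t)"
    and cross: "I (k - 1) < J 0"
    using assms unfolding has_k_crossing_def by auto
  have "\<forall>t<k. (I t, J t) \<in> G"
    using arcs k_crossing_arc_gap[OF assms mono cross] by fastforce
  with mono cross show "has_k_crossing k G"
    unfolding has_k_crossing_def by blast
qed (auto intro: has_k_crossing_mono)

lemma has_k_crossing_image_strict_mono:
  assumes f: "strict_mono f"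
  shows "has_k_crossing k (map_prod f f ` G) \<longleftrightarrow> has_k_crossing k G"
proof
  assume "has_k_crossing k (map_prod f f ` G)"
  then obtain I J where arcs: "\<forall>t<k. (I t, J t) \<in> map_prod f f ` G"
    and mono: "\<forall>t. Suc t < k \<longrightarrow> I t < I (Suc t) \<and> J t < J (Suc t)"
    and cross: "0 < k \<longrightarrow> I (k - 1) < J 0"
    unfolding has_k_crossing_def by blast
  define g where "g = inv f"
  have preimage: "(g (I t), g (J t)) \<in> G \<and> I t = f (g (I t)) \<and> J t = f (g (J t))" if "t < k" for t
    using arcs that strict_mono_imp_inj_on[OF f] unfolding g_def by (auto simp: inv_f_f)
  have "\<forall>t<k. (g (I t), g (J t)) \<in> G"
    using preimage by blast
  moreover have "\<forall>t. Suc t < k \<longrightarrow> g (I t) < g (I (Suc t)) \<and> g (J t) < g (J (Suc t))"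
    using mono preimage by (metis Suc_lessD f strict_mono_less)
  moreover have "0 < k \<longrightarrow> g (I (k - 1)) < g (J 0)"
    using cross preimage by (metis diff_less f strict_mono_less zero_less_one)
  ultimately show "has_k_crossing k G"
    by (rule has_k_crossingI)
next
  assume "has_k_crossing k G"
  then obtain I J where "\<forall>t<k. (I t, J t) \<in> G"
    and "\<forall>t. Suc t < k \<longrightarrow> I t < I (Suc t) \<and> J t < J (Suc t)"
    and "0 < k \<longrightarrow> I (k - 1) < J 0"
    unfolding has_k_crossing_def by blast
  then show "has_k_crossing k (map_prod f f ` G)"
    using strict_mono_less[OF f] by (intro has_k_crossingI[of k "\<lambda>t. f (I t)" "\<lambda>t. f (J t)"]) auto
qed

lemma is_digraph_subset: "is_digraph n G \<Longrightarrow> G \<subseteq> {1..n} \<times> {1..n}"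
  unfolding is_digraph_def by fastforce

lemma finite_digraphs: "finite {G. is_digraph n G}"
  by (rule finite_subset[of _ "Pow ({1..n} \<times> {1..n})"]) (use is_digraph_subset in blast, simp)

definition arcs_disjoint :: "(nat \<times> nat) set \<Rightarrow> bool" where
  "arcs_disjoint G \<longleftrightarrow> (\<forall>a\<in>G. \<forall>b\<in>G. \<forall>v. lies_in v a \<and> lies_in v b \<longrightarrow> a = b)"

lemma k_noncrossing_digraph_iff:
  "k_noncrossing_digraph k n G \<longleftrightarrow> is_digraph n G \<and> arcs_disjoint G \<and> \<not> has_k_crossing k G"
proof (cases "is_digraph n G")
  case True
  then have "finite G"
    using finite_subset[OF is_digraph_subset] by blast
  then have "card {a\<in>G. lies_in v a} \<le> 1 \<longleftrightarrow> (\<forall>a\<in>G. \<forall>b\<in>G. lies_in v a \<and> lies_in v b \<longrightarrow> a = b)" for v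
    by (auto simp: card_le_Suc0_iff_eq)
  then show ?thesis
    unfolding k_noncrossing_digraph_def arcs_disjoint_def by blast
qed (simp add: k_noncrossing_digraph_def)

definition skip2 :: "nat \<Rightarrow> nat \<Rightarrow> nat" where
  "skip2 i v = (if v < i then v else v + 2)"

definition unskip2 :: "nat \<Rightarrow> nat \<Rightarrow> nat" where
  "unskip2 i u = (if u < i then u else u - 2)"

lemma strict_mono_skip2: "strict_mono (skip2 i)"
  by (auto simp: strict_mono_def skip2_def)

lemma skip2_eq_iff [simp]: "skip2 i x = skip2 i y \<longleftrightarrow> x = y"
  by (auto simp: skip2_def)

lemma skip2_neq [simp]: "skip2 i v \<noteq> i" "skip2 i v \<noteq> Suc i"
  by (auto simp: skip2_def)

lemma skip2_unskip2: "u \<noteq> i \<Longrightarrow> u \<noteq> Suc i \<Longrightarrow> skip2 i (unskip2 i u) = u"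
  by (auto simp: skip2_def unskip2_def)

abbreviation skip2_arc :: "nat \<Rightarrow> nat \<times> nat \<Rightarrow> nat \<times> nat" where
  "skip2_arc i \<equiv> map_prod (skip2 i) (skip2 i)"

lemma lies_in_skip2_arc: "lies_in u (skip2_arc i a) \<longleftrightarrow> (\<exists>v. u = skip2 i v \<and> lies_in v a)"
  by (cases a) (auto simp: lies_in_def)

lemma lies_in_skip2_arc_skip2 [simp]: "lies_in (skip2 i v) (skip2_arc i a) \<longleftrightarrow> lies_in v a"
  by (cases a) (auto simp: lies_in_def)

lemma inj_skip2_arc: "inj (skip2_arc i)"
  by (simp add: map_prod_inj_on inj_def)

text \<open>Reverses the contraction of the 1-arc (i, i+1): the vertices from i on move up by two
  and the arc is put into the gap.\<close>
definition splice_1arc :: "nat \<Rightarrow> (nat \<times> nat) set \<Rightarrow> (nat \<times> nat) set" where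
  "splice_1arc i H = insert (i, Suc i) (skip2_arc i ` H)"

lemma skip2_arc_neq_1arc [simp]: "skip2_arc i a \<noteq> (i, Suc i)"
  by (cases a) auto

lemma inj_splice_1arc: "inj (splice_1arc i)"
proof (rule injI)
  fix H H' assume "splice_1arc i H = splice_1arc i H'"
  then have "skip2_arc i ` H = skip2_arc i ` H'"
    unfolding splice_1arc_def by (metis Diff_insert_absorb image_iff skip2_arc_neq_1arc)
  then show "H = H'"
    using inj_skip2_arc by (simp add: inj_image_eq_iff)
qed

lemma is_digraph_splice_1arc:
  assumes "1 \<le> i" "Suc i \<le> n"
  shows "is_digraph n (splice_1arc i H) \<longleftrightarrow> is_digraph (n - 2) H"
proof -
  have "(case skip2_arc i a of (u, v) \<Rightarrow> 1 \<le> u \<and> u < v \<and> v \<le> n)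
      \<longleftrightarrow> (case a of (u, v) \<Rightarrow> 1 \<le> u \<and> u < v \<and> v \<le> n - 2)" for a
    using assms by (cases a) (auto simp: skip2_def)
  then show ?thesis
    using assms unfolding is_digraph_def splice_1arc_def by (simp del: map_prod_simp)
qed

lemma arcs_disjoint_splice_1arc: "arcs_disjoint (splice_1arc i H) \<longleftrightarrow> arcs_disjoint H"
proof -
  have "\<not> (lies_in v (i, Suc i) \<and> lies_in v (skip2_arc i a))" for v a
    by (auto simp: lies_in_skip2_arc lies_in_def)
  moreover have "(\<forall>v. lies_in v (skip2_arc i a) \<and> lies_in v (skip2_arc i b) \<longrightarrow> skip2_arc i a = skip2_arc i b)
      \<longleftrightarrow> (\<forall>v. lies_in v a \<and> lies_in v b \<longrightarrow> a = b)" for a b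
    using inj_skip2_arc[of i] by (auto simp: lies_in_skip2_arc inj_eq)
  ultimately show ?thesis
    unfolding arcs_disjoint_def splice_1arc_def by (simp del: map_prod_simp) blast
qed

lemma has_k_crossing_splice_1arc:
  "2 \<le> k \<Longrightarrow> has_k_crossing k (splice_1arc i H) \<longleftrightarrow> has_k_crossing k H"
  unfolding splice_1arc_def
  by (simp add: has_k_crossing_insert_1arc has_k_crossing_image_strict_mono strict_mono_skip2)

lemma isolated_vertices_splice_1arc:
  assumes "1 \<le> i" "Suc i \<le> n"
  shows "isolated_vertices n (splice_1arc i H) = skip2 i ` isolated_vertices (n - 2) H"
proof (intro set_eqI iffI)
  fix u assume "u \<in> isolated_vertices n (splice_1arc i H)"
  then have u: "u \<in> {1..n}" "u \<noteq> i" "u \<noteq> Suc i" "\<forall>a\<in>H. \<not> lies_in u (skip2_arc i a)"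
    unfolding isolated_vertices_def splice_1arc_def lies_in_def by auto
  have "\<forall>a\<in>H. \<not> lies_in (unskip2 i u) a"
    using u(4) skip2_unskip2[OF u(2,3)] by (metis lies_in_skip2_arc_skip2)
  moreover have "unskip2 i u \<in> {1..n - 2}"
    using u(1-3) assms by (auto simp: unskip2_def)
  ultimately have "unskip2 i u \<in> isolated_vertices (n - 2) H"
    unfolding isolated_vertices_def by simp
  then show "u \<in> skip2 i ` isolated_vertices (n - 2) H"
    using skip2_unskip2[OF u(2,3)] by (metis image_eqI)
next
  fix u assume "u \<in> skip2 i ` isolated_vertices (n - 2) H"
  then obtain v where "u = skip2 i v" "v \<in> {1..n - 2}" "\<forall>a\<in>H. \<not> lies_in v a"
    unfolding isolated_vertices_def by auto
  then show "u \<in> isolated_vertices n (splice_1arc i H)"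
    using assms by (auto simp: isolated_vertices_def splice_1arc_def lies_in_def skip2_def)
qed

definition noncrossing_digraphs :: "nat \<Rightarrow> nat \<Rightarrow> nat \<Rightarrow> (nat \<times> nat) set set" where
  "noncrossing_digraphs k n l = {G. k_noncrossing_digraph k n G \<and> card (isolated_vertices n G) = l}"

lemma finite_noncrossing_digraphs: "finite (noncrossing_digraphs k n l)"
  by (rule finite_subset[OF _ finite_digraphs[of n]])
    (auto simp: noncrossing_digraphs_def k_noncrossing_digraph_def)

lemma splice_1arc_mem_noncrossing_digraphs:
  assumes "2 \<le> k" "1 \<le> i" "Suc i \<le> n"
  shows "splice_1arc i H \<in> noncrossing_digraphs k n l \<longleftrightarrow> H \<in> noncrossing_digraphs k (n - 2) l"
proof -
  have "card (isolated_vertices n (splice_1arc i H)) = card (isolated_vertices (n - 2) H)"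
    unfolding isolated_vertices_splice_1arc[OF assms(2,3)]
    using strict_mono_imp_inj_on[OF strict_mono_skip2] by (rule card_image)
  then show ?thesis
    using assms
    by (simp add: noncrossing_digraphs_def k_noncrossing_digraph_iff is_digraph_splice_1arc
        arcs_disjoint_splice_1arc has_k_crossing_splice_1arc)
qed

lemma splice_1arc_contract:
  assumes "arcs_disjoint G" "(i, Suc i) \<in> G"
  shows "splice_1arc i (map_prod (unskip2 i) (unskip2 i) ` (G - {(i, Suc i)})) = G"
proof -
  have "skip2_arc i (map_prod (unskip2 i) (unskip2 i) a) = a" if "a \<in> G - {(i, Suc i)}" for a
  proof -
    have "\<not> lies_in i a" "\<not> lies_in (Suc i) a"
      using assms that unfolding arcs_disjoint_def lies_in_def by fastforce+
    then show ?thesis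
      by (cases a) (auto simp: lies_in_def skip2_unskip2)
  qed
  then have "skip2_arc i ` map_prod (unskip2 i) (unskip2 i) ` (G - {(i, Suc i)}) = G - {(i, Suc i)}"
    by (simp add: image_image)
  then show ?thesis
    using assms(2) unfolding splice_1arc_def by auto
qed

lemma subset_splice_1arc_iff:
  assumes "\<forall>(a, b)\<in>B. a < i \<and> b < i"
  shows "B \<subseteq> splice_1arc i H \<longleftrightarrow> B \<subseteq> H"
proof -
  have "a \<in> splice_1arc i H \<longleftrightarrow> a \<in> H" if a_in: "a \<in> B" for a
  proof -
    obtain x y where a: "a = (x, y)" "x < i" "y < i"
      using assms a_in by (cases a) auto
    then have "skip2_arc i a = a"
      by (simp add: skip2_def)
    moreover have "a \<noteq> (i, Suc i)"
      using a by simp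
    ultimately show ?thesis
      unfolding splice_1arc_def using inj_image_mem_iff[OF inj_skip2_arc, of i a H] by auto
  qed
  then show ?thesis by blast
qed

lemma noncrossing_digraphs_containing_splice_1arc:
  assumes "2 \<le> k" "1 \<le> i" "Suc i \<le> n" "\<forall>(a, b)\<in>B. a < i \<and> b < i"
  shows "{G \<in> noncrossing_digraphs k n l. insert (i, Suc i) B \<subseteq> G}
       = splice_1arc i ` {H \<in> noncrossing_digraphs k (n - 2) l. B \<subseteq> H}"
proof (intro set_eqI iffI)
  fix G assume "G \<in> {G \<in> noncrossing_digraphs k n l. insert (i, Suc i) B \<subseteq> G}"
  then have G: "G \<in> noncrossing_digraphs k n l" "(i, Suc i) \<in> G" "B \<subseteq> G"
    by auto
  define H where "H = map_prod (unskip2 i) (unskip2 i) ` (G - {(i, Suc i)})"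
  have "arcs_disjoint G"
    using G(1) by (simp add: noncrossing_digraphs_def k_noncrossing_digraph_iff)
  then have GH: "G = splice_1arc i H"
    unfolding H_def using G(2) by (simp add: splice_1arc_contract)
  then have "H \<in> noncrossing_digraphs k (n - 2) l" "B \<subseteq> H"
    using G assms splice_1arc_mem_noncrossing_digraphs subset_splice_1arc_iff by auto
  then show "G \<in> splice_1arc i ` {H \<in> noncrossing_digraphs k (n - 2) l. B \<subseteq> H}"
    using GH by blast
next
  fix G assume "G \<in> splice_1arc i ` {H \<in> noncrossing_digraphs k (n - 2) l. B \<subseteq> H}"
  then obtain H where "H \<in> noncrossing_digraphs k (n - 2) l" "B \<subseteq> H" "G = splice_1arc i H"
    by auto
  then show "G \<in> {G \<in> noncrossing_digraphs k n l. insert (i, Suc i) B \<subseteq> G}"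
    using assms splice_1arc_mem_noncrossing_digraphs subset_splice_1arc_iff
    by (auto simp: splice_1arc_def)
qed

definition one_arcs :: "nat \<Rightarrow> (nat \<times> nat) set" where
  "one_arcs n = {(c, Suc c) | c. 1 \<le> c \<and> Suc c \<le> n}"

definition one_arc_matching :: "nat \<Rightarrow> (nat \<times> nat) set \<Rightarrow> bool" where
  "one_arc_matching n B \<longleftrightarrow>
     B \<subseteq> one_arcs n \<and> (\<forall>c. (c, Suc c) \<in> B \<longrightarrow> (Suc c, Suc (Suc c)) \<notin> B)"

lemma mem_one_arcs: "a \<in> one_arcs n \<longleftrightarrow> (\<exists>c. a = (c, Suc c) \<and> 1 \<le> c \<and> Suc c \<le> n)"
  unfolding one_arcs_def by blast

lemma one_arcs_mono: "m \<le> n \<Longrightarrow> one_arcs m \<subseteq> one_arcs n"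
  unfolding one_arcs_def by auto

lemma one_arcs_subset: "one_arcs n \<subseteq> (\<lambda>c. (c, Suc c)) ` {1..n}"
  unfolding one_arcs_def by auto

lemma finite_one_arcs [simp]: "finite (one_arcs n)"
  using one_arcs_subset by (rule finite_subset) simp

lemma card_one_arcs_le: "card (one_arcs n) \<le> n"
proof -
  have "card (one_arcs n) \<le> card ((\<lambda>c. (c, Suc c)) ` {1..n})"
    by (intro card_mono one_arcs_subset) simp
  also have "\<dots> \<le> n"
    using card_image_le[of "{1..n}" "\<lambda>c. (c, Suc c)"] by simp
  finally show ?thesis .
qed

lemma finite_one_arc_matchings: "finite {B. one_arc_matching n B}"
  by (rule finite_subset[of _ "Pow (one_arcs n)"]) (auto simp: one_arc_matching_def)

lemma one_arc_matching_finite: "one_arc_matching n B \<Longrightarrow> finite B"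
  unfolding one_arc_matching_def using finite_one_arcs finite_subset by blast

lemma one_arc_matching_max_arc:
  assumes B: "one_arc_matching n B" "B \<noteq> {}"
  obtains i B' where "B = insert (i, Suc i) B'" "(i, Suc i) \<notin> B'" "1 \<le> i" "Suc i \<le> n"
    "\<forall>(a, b)\<in>B'. a < i \<and> b < i" "one_arc_matching (n - 2) B'"
proof -
  have fin: "finite (fst ` B)"
    using one_arc_matching_finite[OF B(1)] by simp
  define i where "i = Max (fst ` B)"
  have "i \<in> fst ` B"
    unfolding i_def using fin B(2) by (intro Max_in) auto
  then have i: "(i, Suc i) \<in> B" "1 \<le> i" "Suc i \<le> n"
    using B(1) unfolding one_arc_matching_def one_arcs_def by auto
  define B' where "B' = B - {(i, Suc i)}"
  have below: "d = Suc c \<and> 1 \<le> c \<and> Suc c < i" if "(c, d) \<in> B'" for c d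
  proof -
    have cd: "(c, d) \<in> B" "d = Suc c" "1 \<le> c" "(c, d) \<noteq> (i, Suc i)"
      using that B(1) unfolding B'_def one_arc_matching_def one_arcs_def by auto
    then have "c \<in> fst ` B"
      by force
    then have "c \<le> i"
      unfolding i_def using fin by (rule Max_ge[rotated])
    moreover have "Suc c \<noteq> i"
      using cd i(1) B(1) unfolding one_arc_matching_def by auto
    ultimately show ?thesis
      using cd by auto
  qed
  have "B' \<subseteq> one_arcs (n - 2)"
    using below i(3) unfolding one_arcs_def by fastforce
  then have "one_arc_matching (n - 2) B'"
    using B(1) unfolding one_arc_matching_def B'_def by auto
  moreover have "\<forall>(a, b)\<in>B'. a < i \<and> b < i"
    using below by fastforce
  moreover have "B = insert (i, Suc i) B'"
    using i(1) unfolding B'_def by auto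
  ultimately show thesis
    using that i unfolding B'_def by blast
qed

lemma card_noncrossing_digraphs_containing_matching:
  assumes "2 \<le> k" "one_arc_matching n B"
  shows "card {G \<in> noncrossing_digraphs k n l. B \<subseteq> G} = f_count k (n - 2 * card B) l"
  using assms(2)
proof (induction "card B" arbitrary: n B)
  case 0
  then have "B = {}"
    using one_arc_matching_finite by auto
  then show ?case
    by (simp add: f_count_def noncrossing_digraphs_def)
next
  case (Suc b)
  then have "B \<noteq> {}"
    by auto
  with Suc.prems obtain i B' where B': "B = insert (i, Suc i) B'" "(i, Suc i) \<notin> B'" "1 \<le> i" "Suc i \<le> n"
    "\<forall>(a, b)\<in>B'. a < i \<and> b < i" "one_arc_matching (n - 2) B'"
    by (rule one_arc_matching_max_arc)
  then have "card B' = b"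
    using Suc.hyps(2) one_arc_matching_finite by fastforce
  have "card {G \<in> noncrossing_digraphs k n l. B \<subseteq> G}
      = card {H \<in> noncrossing_digraphs k (n - 2) l. B' \<subseteq> H}"
    unfolding B'(1) noncrossing_digraphs_containing_splice_1arc[OF assms(1) B'(3-5)]
    by (rule card_image[OF inj_on_subset[OF inj_splice_1arc subset_UNIV]])
  also have "\<dots> = f_count k (n - 2 * card B) l"
    using Suc.hyps(1)[OF _ B'(6)] \<open>card B' = b\<close> Suc.hyps(2)[symmetric] by simp
  finally show ?case .
qed

lemma one_arc_matching_Suc_Suc_notin:
  "(Suc m, Suc (Suc m)) \<notin> B \<Longrightarrow> one_arc_matching (Suc (Suc m)) B \<longleftrightarrow> one_arc_matching (Suc m) B"
  unfolding one_arc_matching_def subset_iff mem_one_arcs by (metis le_Suc_eq Suc_le_mono)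

lemma one_arc_matching_Suc_Suc_in:
  assumes a: "(Suc m, Suc (Suc m)) \<in> B"
  shows "one_arc_matching (Suc (Suc m)) B \<longleftrightarrow> one_arc_matching m (B - {(Suc m, Suc (Suc m))})"
proof
  assume B: "one_arc_matching (Suc (Suc m)) B"
  have "B - {(Suc m, Suc (Suc m))} \<subseteq> one_arcs m"
  proof
    fix x assume x: "x \<in> B - {(Suc m, Suc (Suc m))}"
    then obtain c where c: "x = (c, Suc c)" "1 \<le> c" "Suc c \<le> Suc (Suc m)"
      using B unfolding one_arc_matching_def one_arcs_def by auto
    have "c \<noteq> Suc m"
      using x c by auto
    moreover have "c \<noteq> m"
      using x c B a unfolding one_arc_matching_def by auto
    ultimately show "x \<in> one_arcs m"
      using c unfolding one_arcs_def by auto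
  qed
  then show "one_arc_matching m (B - {(Suc m, Suc (Suc m))})"
    using B unfolding one_arc_matching_def by auto
next
  assume B': "one_arc_matching m (B - {(Suc m, Suc (Suc m))})"
  have "B \<subseteq> one_arcs (Suc (Suc m))"
    using B' a one_arcs_mono[of m "Suc (Suc m)"] unfolding one_arc_matching_def one_arcs_def by auto
  moreover have "(Suc c, Suc (Suc c)) \<notin> B" if "(c, Suc c) \<in> B" for c
  proof (cases "c = Suc m")
    case True
    then have "(Suc c, Suc (Suc c)) \<notin> one_arcs m" "(Suc c, Suc (Suc c)) \<noteq> (Suc m, Suc (Suc m))"
      unfolding one_arcs_def by auto
    then show ?thesis
      using B' unfolding one_arc_matching_def by auto
  next
    case False
    then have "(c, Suc c) \<in> one_arcs m"
      using B' that unfolding one_arc_matching_def by auto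
    then have "(Suc c, Suc (Suc c)) \<noteq> (Suc m, Suc (Suc m))"
      unfolding one_arcs_def by auto
    then show ?thesis
      using B' that False unfolding one_arc_matching_def by auto
  qed
  ultimately show "one_arc_matching (Suc (Suc m)) B"
    unfolding one_arc_matching_def by blast
qed

lemma one_arc_matchings_Suc_Suc:
  "{B. one_arc_matching (Suc (Suc m)) B \<and> card B = Suc b}
     = {B. one_arc_matching (Suc m) B \<and> card B = Suc b}
       \<union> insert (Suc m, Suc (Suc m)) ` {B. one_arc_matching m B \<and> card B = b}"
  (is "?L = ?N \<union> insert ?a ` ?M")
proof (intro set_eqI iffI)
  fix B assume B: "B \<in> ?L"
  show "B \<in> ?N \<union> insert ?a ` ?M"
  proof (cases "?a \<in> B")
    case True
    have "one_arc_matching m (B - {?a})"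
      using B one_arc_matching_Suc_Suc_in[OF True] by simp
    moreover have "card (B - {?a}) = b"
      using B True by simp
    ultimately have "B - {?a} \<in> ?M"
      by simp
    moreover have "B = insert ?a (B - {?a})"
      using True by auto
    ultimately show ?thesis
      by blast
  next
    case False
    then show ?thesis
      using B one_arc_matching_Suc_Suc_notin[OF False] by simp
  qed
next
  fix B assume "B \<in> ?N \<union> insert ?a ` ?M"
  then show "B \<in> ?L"
  proof
    assume B: "B \<in> ?N"
    then have "?a \<notin> B"
      unfolding one_arc_matching_def one_arcs_def by auto
    then show ?thesis
      using B one_arc_matching_Suc_Suc_notin[of m B] by simp
  next
    assume "B \<in> insert ?a ` ?M"
    then obtain B' where B': "one_arc_matching m B'" "card B' = b" "B = insert ?a B'"
      by auto
    moreover have "?a \<notin> B'"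
      using B'(1) unfolding one_arc_matching_def one_arcs_def by auto
    then have "B - {?a} = B'" "card B = Suc b"
      using B' one_arc_matching_finite[OF B'(1)] by auto
    then show ?thesis
      using B' one_arc_matching_Suc_Suc_in[of m B] by simp
  qed
qed

lemma one_arc_matchings_le_1:
  assumes "n \<le> 1"
  shows "{B. one_arc_matching n B \<and> card B = b} = (if b = 0 then {{}} else {})"
proof -
  have "one_arcs n = {}"
    using assms unfolding one_arcs_def by auto
  then show ?thesis
    unfolding one_arc_matching_def by auto
qed

lemma card_one_arc_matchings: "card {B. one_arc_matching n B \<and> card B = b} = (n - b) choose b"
proof (induction n arbitrary: b rule: induct_nat_012)
  case 0
  then show ?case
    by (simp add: one_arc_matchings_le_1)
next
  case 1
  then show ?case
    by (cases b) (simp_all add: one_arc_matchings_le_1)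
next
  case (ge2 m)
  show ?case
  proof (cases b)
    case 0
    have "{B. one_arc_matching (Suc (Suc m)) B \<and> card B = 0} = {{}}"
      using one_arc_matching_finite by (auto simp: one_arc_matching_def)
    then show ?thesis
      using 0 by simp
  next
    case (Suc b')
    let ?a = "(Suc m, Suc (Suc m))"
    have "?a \<notin> B" if "one_arc_matching (Suc m) B" for B
      using that unfolding one_arc_matching_def one_arcs_def by auto
    then have disjoint: "{B. one_arc_matching (Suc m) B \<and> card B = b}
        \<inter> insert ?a ` {B. one_arc_matching m B \<and> card B = b'} = {}"
      by blast
    have "inj_on (insert ?a) {B. one_arc_matching m B \<and> card B = b'}"
    proof (rule inj_onI)
      fix X Y
      assume "X \<in> {B. one_arc_matching m B \<and> card B = b'}" "Y \<in> {B. one_arc_matching m B \<and> card B = b'}"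
        and eq: "insert ?a X = insert ?a Y"
      then have "?a \<notin> X" "?a \<notin> Y"
        unfolding one_arc_matching_def one_arcs_def by auto
      with eq show "X = Y"
        by (metis insert_ident)
    qed
    then have "card {B. one_arc_matching (Suc (Suc m)) B \<and> card B = b}
        = ((Suc m - b) choose b) + ((m - b') choose b')"
      unfolding Suc one_arc_matchings_Suc_Suc
      using disjoint[unfolded Suc] finite_one_arc_matchings ge2.IH
      by (subst card_Un_disjoint) (auto simp: card_image intro: finite_subset)
    also have "\<dots> = (Suc (Suc m) - b) choose b"
      using Suc by (cases "b' \<le> m") (simp_all add: Suc_diff_le binomial_eq_0)
    finally show ?thesis .
  qed
qed

lemma card_isolated_vertices_le: "card (isolated_vertices n G) \<le> n"
proof -
  have "card (isolated_vertices n G) \<le> card {1..n}"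
    by (rule card_mono) (auto simp: isolated_vertices_def)
  then show ?thesis
    by simp
qed

lemma f_count_eq_0:
  assumes "m < l"
  shows "f_count k m l = 0"
proof -
  have "{G. k_noncrossing_digraph k m G \<and> card (isolated_vertices m G) = l} = {}"
    using assms card_isolated_vertices_le[of m] by (metis (mono_tags, lifting) Collect_empty_eq leD)
  then show ?thesis
    unfolding f_count_def by (simp only: card.empty)
qed

lemma S_count_eq_card_avoiding_one_arcs:
  "S_count k n l = card {G \<in> noncrossing_digraphs k n l. G \<inter> one_arcs n = {}}"
proof -
  have "no_1_arc G \<longleftrightarrow> G \<inter> one_arcs n = {}" if "is_digraph n G" for G
    using that unfolding no_1_arc_def one_arcs_def is_digraph_def by fastforce
  then have "{G. k_noncrossing_RNA k n G \<and> card (isolated_vertices n G) = l}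
      = {G \<in> noncrossing_digraphs k n l. G \<inter> one_arcs n = {}}"
    unfolding noncrossing_digraphs_def k_noncrossing_RNA_def k_noncrossing_digraph_def by blast
  then show ?thesis
    unfolding S_count_def by simp
qed

lemma no_noncrossing_digraph_contains_adjacent_1arcs:
  assumes "(c, Suc c) \<in> B" "(Suc c, Suc (Suc c)) \<in> B"
  shows "{G \<in> noncrossing_digraphs k n l. B \<subseteq> G} = {}"
proof -
  have "lies_in (Suc c) (c, Suc c)" "lies_in (Suc c) (Suc c, Suc (Suc c))"
    "(c, Suc c) \<noteq> (Suc c, Suc (Suc c))"
    by (simp_all add: lies_in_def)
  then have "\<not> arcs_disjoint G" if "B \<subseteq> G" for G
    using assms that unfolding arcs_disjoint_def by blast
  then show ?thesis
    by (auto simp: noncrossing_digraphs_def k_noncrossing_digraph_iff)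
qed

lemma S_count_alternating_sum:
  assumes "2 \<le> k"
  shows "int (S_count k n l) = (\<Sum>b=0..n. (-1) ^ b * int ((n - b) choose b) * int (f_count k (n - 2*b) l))"
proof -
  let ?D = "noncrossing_digraphs k n l"
  let ?term = "\<lambda>B. (-1) ^ card B * int (f_count k (n - 2 * card B) l)"
  have "int (S_count k n l) = (\<Sum>B\<in>Pow (one_arcs n). (-1) ^ card B * int (card {G\<in>?D. B \<subseteq> G}))"
    unfolding S_count_eq_card_avoiding_one_arcs
    by (rule card_avoiding_eq_alternating_sum[OF finite_noncrossing_digraphs finite_one_arcs])
  also have "\<dots> = (\<Sum>B\<in>{B. one_arc_matching n B}. (-1) ^ card B * int (card {G\<in>?D. B \<subseteq> G}))"
    by (rule sum.mono_neutral_right)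
      (auto simp: one_arc_matching_def no_noncrossing_digraph_contains_adjacent_1arcs)
  also have "\<dots> = sum ?term {B. one_arc_matching n B}"
    using card_noncrossing_digraphs_containing_matching[OF assms] by simp
  also have "\<dots> = (\<Sum>b=0..n. sum ?term {B. one_arc_matching n B \<and> card B = b})"
  proof -
    have "card B \<le> n" if "one_arc_matching n B" for B
    proof -
      have "card B \<le> card (one_arcs n)"
        using that by (intro card_mono) (simp_all add: one_arc_matching_def)
      then show ?thesis
        using card_one_arcs_le[of n] by linarith
    qed
    then have "card ` {B. one_arc_matching n B} \<subseteq> {0..n}"
      by auto
    from sum.group[OF finite_one_arc_matchings finite_atLeastAtMost this, of ?term]
    show ?thesis
      by (simp add: conj_commute)
  qed
  also have "\<dots> = (\<Sum>b=0..n. (-1) ^ b * int ((n - b) choose b) * int (f_count k (n - 2*b) l))"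
  proof (rule sum.cong[OF refl])
    fix b
    have "sum ?term {B. one_arc_matching n B \<and> card B = b}
        = (\<Sum>B\<in>{B. one_arc_matching n B \<and> card B = b}. (-1) ^ b * int (f_count k (n - 2*b) l))"
      by (rule sum.cong) auto
    then show "sum ?term {B. one_arc_matching n B \<and> card B = b}
        = (-1) ^ b * int ((n - b) choose b) * int (f_count k (n - 2*b) l)"
      by (simp add: card_one_arc_matchings)
  qed
  finally show ?thesis .
qed

lemma S_count_formula:
  assumes "2 \<le> k"
  shows "int (S_count k n l) =
    (\<Sum>b=0..(n - l) div 2. (-1) ^ b * int ((n - b) choose b) * int (f_count k (n - 2*b) l))"
proof -
  have "(-1) ^ b * int ((n - b) choose b) * int (f_count k (n - 2*b) l) = 0"
    if "(n - l) div 2 < b" for b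
  proof (cases "n < 2 * b")
    case True
    then show ?thesis
      by (simp add: binomial_eq_0)
  next
    case False
    then show ?thesis
      using that by (simp add: f_count_eq_0)
  qed
  then have "(\<Sum>b=0..(n - l) div 2. (-1) ^ b * int ((n - b) choose b) * int (f_count k (n - 2*b) l))
      = (\<Sum>b=0..n. (-1) ^ b * int ((n - b) choose b) * int (f_count k (n - 2*b) l))"
    by (intro sum.mono_neutral_left) auto
  then show ?thesis
    using S_count_alternating_sum[OF assms] by simp
qed

lemma S_total_eq_sum_S_count: "S_total k n = (\<Sum>l'=0..n. S_count k n l')"
proof -
  let ?A = "{G. k_noncrossing_RNA k n G}"
  have "finite ?A"
    by (rule finite_subset[OF _ finite_digraphs[of n]])
      (auto simp: k_noncrossing_RNA_def k_noncrossing_digraph_def)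
  moreover have "(\<lambda>G. card (isolated_vertices n G)) ` ?A \<subseteq> {0..n}"
    using card_isolated_vertices_le by auto
  ultimately have "card ?A = (\<Sum>l'=0..n. card {G \<in> ?A. card (isolated_vertices n G) = l'})"
    using sum.group[of ?A "{0..n}" "\<lambda>G. card (isolated_vertices n G)" "\<lambda>_. 1::nat"] by simp
  then show ?thesis
    unfolding S_total_def S_count_def by simp
qed

lemma S_total_formula:
  assumes "2 \<le> k"
  shows "int (S_total k n) =
    (\<Sum>b=0..n div 2. (-1) ^ b * int ((n - b) choose b) *
       (\<Sum>l'=0..n - 2*b. int (f_count k (n - 2*b) l')))"
proof -
  have f_sum: "(\<Sum>l'=0..n. int (f_count k (n - 2*b) l')) = (\<Sum>l'=0..n - 2*b. int (f_count k (n - 2*b) l'))"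
    for b
    by (rule sum.mono_neutral_right) (auto simp: f_count_eq_0)
  have "int (S_total k n) = (\<Sum>l'=0..n. int (S_count k n l'))"
    by (simp add: S_total_eq_sum_S_count)
  also have "\<dots> = (\<Sum>l'=0..n. \<Sum>b=0..n. (-1) ^ b * int ((n - b) choose b) * int (f_count k (n - 2*b) l'))"
    using S_count_alternating_sum[OF assms] by simp
  also have "\<dots> = (\<Sum>b=0..n. (-1) ^ b * int ((n - b) choose b) * (\<Sum>l'=0..n. int (f_count k (n - 2*b) l')))"
    unfolding sum_distrib_left by (rule sum.swap)
  also have "\<dots> = (\<Sum>b=0..n div 2. (-1) ^ b * int ((n - b) choose b) *
       (\<Sum>l'=0..n - 2*b. int (f_count k (n - 2*b) l')))"
    unfolding f_sum by (rule sum.mono_neutral_right) (auto simp: binomial_eq_0)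
  finally show ?thesis .
qed

theorem theorem3p1:
  fixes k n l :: nat
  assumes "k \<ge> 2" and "n \<ge> 1"
  shows "int (S_count k n l) =
           (\<Sum>b=0..(n - l) div 2. (-1) ^ b * int ((n - b) choose b) * int (f_count k (n - 2*b) l))
         \<and> int (S_total k n) =
           (\<Sum>b=0..n div 2. (-1) ^ b * int ((n - b) choose b) *
              (\<Sum>l'=0..n - 2*b. int (f_count k (n - 2*b) l')))"
  using S_count_formula[OF assms(1)] S_total_formula[OF assms(1)] by blast

end
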